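(* For an information-lossless FS encoder with side information, the joint spectral radius of its family of Kraft matrices satisfies $\rho_{\mathrm{JSR}}(\mathcal{K})\le 1$.
   Context: Let $\mathcal{X}$ be a finite source alphabet, $\mathcal{W}$ a finite side-information alphabet, $\mathcal{Z}$ a finite set of $s$ states, and $\mathcal{Y}$ a finite set of binary strings (possibly including the empty string). An FS encoder with side information is given by an output function $f:\mathcal{Z}\times\mathcal{X}\times\mathcal{W}\to\mathcal{Y}$ and a next-state function $g:\mathcal{Z}\times\mathcal{X}\times\mathcal{W}\to\mathcal{Z}$. Given an initial state $z_1=z$, source symbols $x^n$ and side information $w^n$, it produces $y_i=f(z_i,x_i,w_i)$ and $z_{i+1}=g(z_i,x_i,w_i)$; write $g(z,x^n,w^n)=z_{n+1}$, let $f(z,x^n,w^n)$ be the concatenation of $y_1,\dots,y_n$ as a binary string, and $L[f(z,x^n,w^n)]=\sum_{i=1}^n L(y_i)$ where $L$ is string length. The encoder is information lossless with side information if for every $n$, the quadruple $(z_1, f(z_1,x^n,w^n), w^n, z_{n+1})$ uniquely determines $x^n\in\mathcal{X}^n$. For each $w\in\mathcal{W}$, the Kraft matrix $K(w)$ is the $s\times s$ nonnegative matrix with $[K(w)]_{zz'}=\sum_{\{x\in\mathcal{X}:\ g(z,x,w)=z'\}}2^{-L[f(z,x,w)]}$; for $w^n\in\mathcal{W}^n$, $K(w^n)=K(w_1)K(w_2)\cdots K(w_n)$; and $\mathcal{K}=\{K(w):w\in\mathcal{W}\}$. The joint spectral radius is $\rho_{\mathrm{JSR}}(\mathcal{K})=\lim_{n\to\infty}\max_{w^n\in\mathcal{W}^n}\|K(w^n)\|^{1/n}$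 for any matrix norm $\|\cdot\|$. *)

theory Defs
  imports "HOL-Analysis.Analysis"
begin

(* FS encoder with side information: states 'z, source symbols 'x, side information 'w
   (all finite types). *)

fun fs_out :: "('z \<Rightarrow> 'x \<Rightarrow> 'w \<Rightarrow> bool list) \<Rightarrow> ('z \<Rightarrow> 'x \<Rightarrow> 'w \<Rightarrow> 'z)
                \<Rightarrow> 'z \<Rightarrow> 'x list \<Rightarrow> 'w list \<Rightarrow> bool list" where
  "fs_out f g z (x # xs) (w # ws) = f z x w @ fs_out f g (g z x w) xs ws"
| "fs_out f g z _ _ = []"

fun fs_state :: "('z \<Rightarrow> 'x \<Rightarrow> 'w \<Rightarrow> bool list) \<Rightarrow> ('z \<Rightarrow> 'x \<Rightarrow> 'w \<Rightarrow> 'z)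
                \<Rightarrow> 'z \<Rightarrow> 'x list \<Rightarrow> 'w list \<Rightarrow> 'z" where
  "fs_state f g z (x # xs) (w # ws) = fs_state f g (g z x w) xs ws"
| "fs_state f g z _ _ = z"

definition info_lossless_si ::
  "('z \<Rightarrow> 'x \<Rightarrow> 'w \<Rightarrow> bool list) \<Rightarrow> ('z \<Rightarrow> 'x \<Rightarrow> 'w \<Rightarrow> 'z) \<Rightarrow> bool" where
  "info_lossless_si f g \<longleftrightarrow>
     (\<forall>n z xs xs' ws. length xs = n \<and> length xs' = n \<and> length ws = n \<and>
        fs_out f g z xs ws = fs_out f g z xs' ws \<and>
        fs_state f g z xs ws = fs_state f g z xs' ws \<longrightarrow> xs = xs')"

definition kraft_matrix ::
  "('z::finite \<Rightarrow> 'x::finite \<Rightarrow> 'w \<Rightarrow> bool list) \<Rightarrow> ('z \<Rightarrow> 'x \<Rightarrow> 'w \<Rightarrow> 'z) \<Rightarrow> 'w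
     \<Rightarrow> real ^ 'z ^ 'z" where
  "kraft_matrix f g w = (\<chi> z z'. \<Sum>x\<in>{x. g z x w = z'}. (1/2::real) ^ length (f z x w))"

definition kraft_prod ::
  "('z::finite \<Rightarrow> 'x::finite \<Rightarrow> 'w \<Rightarrow> bool list) \<Rightarrow> ('z \<Rightarrow> 'x \<Rightarrow> 'w \<Rightarrow> 'z) \<Rightarrow> 'w list
     \<Rightarrow> real ^ 'z ^ 'z" where
  "kraft_prod f g ws = foldr (\<lambda>w M. kraft_matrix f g w ** M) ws (mat 1)"

text \<open>n-th term max_{w^n} ||K(w^n)||^(1/n); the matrix norm used is the Frobenius norm
  (the library norm on real^'z^'z).\<close>
definition jsr_seq ::
  "('z::finite \<Rightarrow> 'x::finite \<Rightarrow> 'w::finite \<Rightarrow> bool list) \<Rightarrow> ('z \<Rightarrow> 'x \<Rightarrow> 'w \<Rightarrow> 'z) \<Rightarrow> nat \<Rightarrow> real" where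
  "jsr_seq f g n = Max ((\<lambda>ws. norm (kraft_prod f g ws) powr (1 / real n)) ` {ws. length ws = n})"

definition jsr ::
  "('z::finite \<Rightarrow> 'x::finite \<Rightarrow> 'w::finite \<Rightarrow> bool list) \<Rightarrow> ('z \<Rightarrow> 'x \<Rightarrow> 'w \<Rightarrow> 'z) \<Rightarrow> real" where
  "jsr f g = lim (jsr_seq f g)"

end

theory Submission
  imports Defs "HOL-Real_Asymp.Real_Asymp"
begin

(* Losslessness makes x^n |-> f(z, x^n, w^n) injective on the source sequences that drive the
   encoder from z to z' under w^n, and the (z, z') entry of K(w^n) is the Kraft sum of exactly
   these outputs. Distinct binary strings of length at most n * l_max have Kraft sum at most
   n * l_max + 1, so max_{w^n} ||K(w^n)|| grows at most linearly and its n-th root tends to at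
   most 1. The limit exists by Fekete's lemma, because that maximum is submultiplicative in n. *)

lemma submultiplicative_le_geometric:
  fixes a :: "nat \<Rightarrow> real"
  assumes nonneg: "\<And>n. a n \<ge> 0" and submult: "\<And>m n. a (m + n) \<le> a m * a n"
    and "m \<ge> 1" and "x > 0" and am: "a m \<le> x ^ m"
  shows "\<exists>D>0. \<forall>n. a n \<le> D * x ^ n"
proof -
  define D where "D = 1 + (\<Sum>r<m. a r / x ^ r)"
  have "D > 0"
    using nonneg \<open>x > 0\<close> by (simp add: D_def add_pos_nonneg sum_nonneg)
  have base: "a r \<le> D * x ^ r" if "r < m" for r
  proof -
    have "a r / x ^ r \<le> (\<Sum>r<m. a r / x ^ r)"
      using that nonneg \<open>x > 0\<close> by (intro member_le_sum) auto
    then have "a r / x ^ r \<le> D"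
      by (simp add: D_def)
    then show ?thesis using \<open>x > 0\<close> by (simp add: divide_le_eq mult.commute)
  qed
  have step: "a (q * m + r) \<le> D * x ^ (q * m + r)" if "r < m" for q r
  proof (induction q)
    case 0
    then show ?case using base[OF that] by simp
  next
    case (Suc q)
    have "a (Suc q * m + r) \<le> a m * a (q * m + r)"
      using submult[of m "q * m + r"] by (simp add: add.assoc)
    also have "\<dots> \<le> x ^ m * (D * x ^ (q * m + r))"
      using Suc.IH am nonneg \<open>x > 0\<close> by (intro mult_mono) auto
    also have "\<dots> = D * x ^ (Suc q * m + r)"
      by (simp add: power_add add.assoc)
    finally show ?case .
  qed
  have "a n \<le> D * x ^ n" for n
    using step[of "n mod m" "n div m"] \<open>m \<ge> 1\<close> by simp
  with \<open>D > 0\<close> show ?thesis by blast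
qed

lemma root_less_imp_le_power:
  fixes t x :: real
  assumes "t \<ge> 0" and "m \<ge> 1" and "t powr (1 / real m) < x"
  shows "t \<le> x ^ m"
proof (cases "t = 0")
  case True
  then show ?thesis using assms by simp
next
  case False
  then have "t = (t powr (1 / real m)) ^ m"
    using assms by (simp add: powr_realpow[symmetric] powr_powr)
  also have "\<dots> \<le> x ^ m"
    using assms by (intro power_mono) auto
  finally show ?thesis .
qed

text \<open>Fekete's lemma in multiplicative form; zero terms are allowed.\<close>

lemma submultiplicative_root_tendsto_Inf:
  fixes a :: "nat \<Rightarrow> real"
  assumes nonneg: "\<And>n. a n \<ge> 0" and submult: "\<And>m n. a (m + n) \<le> a m * a n"
  shows "(\<lambda>n. a n powr (1 / real n)) \<longlonglongrightarrow> Inf ((\<lambda>n. a n powr (1 / real n)) ` {1..})"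
    (is "?s \<longlonglongrightarrow> ?L")
proof (rule order_tendstoI)
  have bdd: "bdd_below (?s ` {1..})"
    by (rule bdd_belowI[of _ 0]) auto
  fix y assume "y < ?L"
  then show "\<forall>\<^sub>F n in sequentially. y < ?s n"
    using cInf_lower[OF _ bdd] by (intro eventually_sequentiallyI[of 1]) (auto intro: less_le_trans)
next
  fix y assume "?L < y"
  have "?L \<ge> 0"
    by (rule cInf_greatest) auto
  define x where "x = (?L + y) / 2"
  have "?L < x" "x < y" "x > 0"
    using \<open>?L < y\<close> \<open>?L \<ge> 0\<close> by (auto simp: x_def)
  then obtain m where "m \<ge> 1" "?s m < x"
    using cInf_lessD[of "?s ` {1..}" x] by auto
  then have "a m \<le> x ^ m"
    using nonneg by (intro root_less_imp_le_power) auto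
  then obtain D where "D > 0" and D: "\<And>n. a n \<le> D * x ^ n"
    using submultiplicative_le_geometric[of a m x, OF nonneg submult \<open>m \<ge> 1\<close> \<open>x > 0\<close>] by auto
  have "(\<lambda>n. D powr (1 / real n) * x) \<longlonglongrightarrow> D powr 0 * x"
    using \<open>D > 0\<close> by (intro tendsto_intros lim_1_over_n) auto
  then have "\<forall>\<^sub>F n in sequentially. D powr (1 / real n) * x < y"
    using \<open>x < y\<close> \<open>D > 0\<close> by (intro order_tendstoD(2)) auto
  then show "\<forall>\<^sub>F n in sequentially. ?s n < y"
  proof (rule eventually_mono[OF eventually_conj[OF _ eventually_ge_at_top[of 1]]], clarify)
    fix n :: nat assume "n \<ge> 1" and less: "D powr (1 / real n) * x < y"
    have "?s n \<le> (D * x ^ n) powr (1 / real n)"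
      using D nonneg by (intro powr_mono2) auto
    also have "\<dots> = D powr (1 / real n) * x"
      using \<open>D > 0\<close> \<open>x > 0\<close> \<open>n \<ge> 1\<close> by (simp add: powr_mult powr_realpow[symmetric] powr_powr)
    finally show "?s n < y" using less by linarith
  qed
qed

lemma linear_root_tendsto_1:
  "(c :: real) > 0 \<Longrightarrow> (\<lambda>n. (c * (real n + 1)) powr (1 / real n)) \<longlonglongrightarrow> 1"
  by real_asymp

lemma Max_image_powr:
  fixes A :: "real set"
  assumes "finite A" and "A \<noteq> {}" and "\<And>a. a \<in> A \<Longrightarrow> a \<ge> 0" and "r \<ge> 0"
  shows "Max ((\<lambda>a. a powr r) ` A) = Max A powr r"
proof (rule Max_eqI)
  show "Max A powr r \<in> (\<lambda>a. a powr r) ` A"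
    using assms by simp
qed (use assms in \<open>auto intro: powr_mono2\<close>)

lemma norm_matrix_sq:
  fixes A :: "real ^ 'n ^ 'm"
  shows "(norm A)\<^sup>2 = (\<Sum>i\<in>UNIV. \<Sum>j\<in>UNIV. (A $ i $ j)\<^sup>2)"
  by (simp only: power2_norm_eq_inner) (simp add: inner_vec_def power2_eq_square)

text \<open>The norm on \<^typ>\<open>real ^ 'n ^ 'm\<close> is the Frobenius norm; Cauchy--Schwarz on each
  entry of the product makes it submultiplicative.\<close>

lemma norm_matrix_mult_le:
  fixes A :: "real ^ 'n ^ 'm" and B :: "real ^ 'k ^ 'n"
  shows "norm (A ** B) \<le> norm A * norm B"
proof -
  have "(norm (A ** B))\<^sup>2 = (\<Sum>i\<in>UNIV. \<Sum>k\<in>UNIV. (\<Sum>j\<in>UNIV. A $ i $ j * B $ j $ k)\<^sup>2)"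
    by (simp add: norm_matrix_sq matrix_matrix_mult_def)
  also have "\<dots> \<le> (\<Sum>i\<in>UNIV. \<Sum>k\<in>UNIV. (\<Sum>j\<in>UNIV. (A $ i $ j)\<^sup>2) * (\<Sum>j\<in>UNIV. (B $ j $ k)\<^sup>2))"
    by (intro sum_mono Cauchy_Schwarz_ineq_sum)
  also have "\<dots> = (\<Sum>i\<in>UNIV. \<Sum>j\<in>UNIV. (A $ i $ j)\<^sup>2) * (\<Sum>k\<in>UNIV. \<Sum>j\<in>UNIV. (B $ j $ k)\<^sup>2)"
    by (simp add: sum_product)
  also have "(\<Sum>k\<in>UNIV. \<Sum>j\<in>UNIV. (B $ j $ k)\<^sup>2) = (norm B)\<^sup>2"
    by (subst sum.swap) (simp add: norm_matrix_sq)
  also have "(\<Sum>i\<in>UNIV. \<Sum>j\<in>UNIV. (A $ i $ j)\<^sup>2) = (norm A)\<^sup>2"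
    by (simp add: norm_matrix_sq)
  finally have "(norm (A ** B))\<^sup>2 \<le> (norm A * norm B)\<^sup>2"
    by (simp add: power_mult_distrib)
  then show ?thesis
    by (meson norm_ge_zero power2_le_imp_le mult_nonneg_nonneg)
qed

lemma norm_matrix_le_entry_bound:
  fixes A :: "real ^ 'n ^ 'm"
  assumes "\<And>i j. \<bar>A $ i $ j\<bar> \<le> B"
  shows "norm A \<le> real CARD('m) * real CARD('n) * B"
proof -
  have "norm A \<le> (\<Sum>i\<in>UNIV. norm (A $ i))"
    unfolding norm_vec_def by (rule L2_set_le_sum) simp
  also have "\<dots> \<le> (\<Sum>i\<in>UNIV. \<Sum>j\<in>UNIV. \<bar>A $ i $ j\<bar>)"
    by (intro sum_mono norm_le_l1_cart)
  also have "\<dots> \<le> (\<Sum>i\<in>(UNIV :: 'm set). \<Sum>j\<in>(UNIV :: 'n set). B)"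
    by (intro sum_mono assms)
  finally show ?thesis by simp
qed

text \<open>Each of the \<open>M + 1\<close> possible lengths \<open>k\<close> contributes at most \<open>2\<^sup>k \<cdot> 2\<^sup>-\<^sup>k = 1\<close>.\<close>

lemma kraft_sum_le_max_length:
  fixes U :: "bool list set"
  assumes "\<And>u. u \<in> U \<Longrightarrow> length u \<le> M"
  shows "(\<Sum>u\<in>U. (1/2 :: real) ^ length u) \<le> real M + 1"
proof -
  define T where "T = {u :: bool list. length u \<le> M}"
  have "finite T"
    using finite_lists_length_le[of "UNIV :: bool set" M] by (simp add: T_def)
  have card_length: "card {u :: bool list. length u = k} = 2 ^ k" for k
    using card_lists_length_eq[of "UNIV :: bool set" k] by simp
  have "(\<Sum>u\<in>U. (1/2 :: real) ^ length u) \<le> (\<Sum>u\<in>T. (1/2) ^ length u)"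
    using assms \<open>finite T\<close> by (intro sum_mono2) (auto simp: T_def)
  also have "\<dots> = (\<Sum>k\<le>M. \<Sum>u\<in>{u\<in>T. length u = k}. (1/2) ^ length u)"
    using \<open>finite T\<close> by (intro sum.group[symmetric]) (auto simp: T_def)
  also have "\<dots> = (\<Sum>k\<le>M. real (card {u :: bool list. length u = k}) * (1/2) ^ k)"
    by (intro sum.cong refl) (auto simp: T_def intro!: arg_cong[where f = card])
  also have "\<dots> = real M + 1"
    by (simp add: card_length power_one_over)
  finally show ?thesis .
qed

lemma length_fs_out_le:
  assumes "\<And>z x w. length (f z x w) \<le> l"
  shows "length (fs_out f g z xs ws) \<le> length xs * l"
proof (induction xs arbitrary: z ws)
  case (Cons x xs)
  then show ?case
    using assms by (cases ws) (auto simp: add_mono)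
qed simp

definition fs_inputs ::
  "('z \<Rightarrow> 'x \<Rightarrow> 'w \<Rightarrow> bool list) \<Rightarrow> ('z \<Rightarrow> 'x \<Rightarrow> 'w \<Rightarrow> 'z)
     \<Rightarrow> 'z \<Rightarrow> 'w list \<Rightarrow> 'z \<Rightarrow> 'x list set" where
  "fs_inputs f g z ws z' = {xs. length xs = length ws \<and> fs_state f g z xs ws = z'}"

lemma finite_fs_inputs: "finite (fs_inputs f g z ws z' :: 'x :: finite list set)"
  using finite_lists_length_eq[of "UNIV :: 'x set" "length ws"]
  by (rule finite_subset[rotated]) (auto simp: fs_inputs_def)

lemma fs_inputs_Nil: "fs_inputs f g z [] z' = (if z = z' then {[]} else {})"
  by (auto simp: fs_inputs_def)

lemma fs_inputs_Cons:
  "fs_inputs f g z (w # ws) z' = (\<lambda>(x, xs). x # xs) ` (SIGMA x:UNIV. fs_inputs f g (g z x w) ws z')"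
proof (rule set_eqI)
  fix ys
  show "ys \<in> fs_inputs f g z (w # ws) z' \<longleftrightarrow>
        ys \<in> (\<lambda>(x, xs). x # xs) ` (SIGMA x:UNIV. fs_inputs f g (g z x w) ws z')"
    by (cases ys) (auto simp: fs_inputs_def)
qed

lemma kraft_prod_append:
  "kraft_prod f g (xs @ ys) = kraft_prod f g xs ** kraft_prod f g ys"
  by (induction xs) (simp_all add: kraft_prod_def matrix_mul_assoc)

lemma kraft_prod_Cons_entry:
  "kraft_prod f g (w # ws) $ z $ z' =
     (\<Sum>x\<in>UNIV. (1/2) ^ length (f z x w) * kraft_prod f g ws $ g z x w $ z')"
proof -
  have "kraft_prod f g (w # ws) $ z $ z' =
      (\<Sum>u\<in>UNIV. \<Sum>x\<in>{x\<in>UNIV. g z x w = u}. (1/2) ^ length (f z x w) * kraft_prod f g ws $ u $ z')"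
    by (simp add: kraft_prod_def kraft_matrix_def matrix_matrix_mult_def sum_distrib_right)
  also have "\<dots> = (\<Sum>u\<in>UNIV. \<Sum>x\<in>{x\<in>UNIV. g z x w = u}.
      (1/2) ^ length (f z x w) * kraft_prod f g ws $ g z x w $ z')"
    by (intro sum.cong) auto
  also have "\<dots> = (\<Sum>x\<in>UNIV. (1/2) ^ length (f z x w) * kraft_prod f g ws $ g z x w $ z')"
    by (rule sum.group) auto
  finally show ?thesis .
qed

lemma kraft_prod_entry:
  "kraft_prod f g ws $ z $ z' = (\<Sum>xs\<in>fs_inputs f g z ws z'. (1/2) ^ length (fs_out f g z xs ws))"
proof (induction ws arbitrary: z)
  case Nil
  show ?case by (simp add: fs_inputs_Nil kraft_prod_def mat_def)
next
  case (Cons w ws)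
  have "kraft_prod f g (w # ws) $ z $ z' =
      (\<Sum>x\<in>UNIV. \<Sum>xs\<in>fs_inputs f g (g z x w) ws z'.
         (1/2) ^ length (f z x w) * (1/2) ^ length (fs_out f g (g z x w) xs ws))"
    by (simp add: kraft_prod_Cons_entry Cons.IH sum_distrib_left)
  also have "\<dots> = (\<Sum>(x, xs)\<in>(SIGMA x:UNIV. fs_inputs f g (g z x w) ws z').
      (1/2) ^ length (fs_out f g z (x # xs) (w # ws)))"
    by (subst sum.Sigma) (auto simp: finite_fs_inputs power_add)
  also have "\<dots> = (\<Sum>xs\<in>fs_inputs f g z (w # ws) z'. (1/2) ^ length (fs_out f g z xs (w # ws)))"
    by (simp add: fs_inputs_Cons sum.reindex inj_on_def case_prod_beta')
  finally show ?case .
qed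

lemma info_lossless_si_inj_on_fs_inputs:
  assumes "info_lossless_si f g"
  shows "inj_on (\<lambda>xs. fs_out f g z xs ws) (fs_inputs f g z ws z')"
  using assms unfolding info_lossless_si_def inj_on_def fs_inputs_def by blast

lemma kraft_prod_entry_le:
  assumes "info_lossless_si f g" and "\<And>z x w. length (f z x w) \<le> l"
  shows "kraft_prod f g ws $ z $ z' \<le> real (length ws * l) + 1"
proof -
  let ?out = "\<lambda>xs. fs_out f g z xs ws"
  have "kraft_prod f g ws $ z $ z' = (\<Sum>u\<in>?out ` fs_inputs f g z ws z'. (1/2) ^ length u)"
    using info_lossless_si_inj_on_fs_inputs[OF assms(1)]
    by (simp add: kraft_prod_entry sum.reindex)
  also have "\<dots> \<le> real (length ws * l) + 1"
  proof (rule kraft_sum_le_max_length)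
    fix u assume "u \<in> ?out ` fs_inputs f g z ws z'"
    then obtain xs where "length xs = length ws" and "u = ?out xs"
      by (auto simp: fs_inputs_def)
    then show "length u \<le> length ws * l"
      using length_fs_out_le[of f l g z xs ws] assms(2) by simp
  qed
  finally show ?thesis .
qed

lemma kraft_prod_entry_nonneg: "kraft_prod f g ws $ z $ z' \<ge> 0"
  by (simp add: kraft_prod_entry sum_nonneg)

lemma norm_kraft_prod_le:
  fixes f :: "'z::finite \<Rightarrow> 'x::finite \<Rightarrow> 'w \<Rightarrow> bool list"
  assumes "info_lossless_si f g" and "\<And>z x w. length (f z x w) \<le> l"
  shows "norm (kraft_prod f g ws) \<le> real CARD('z) * real CARD('z) * (real (length ws * l) + 1)"
proof (rule norm_matrix_le_entry_bound)
  fix z z'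
  show "\<bar>kraft_prod f g ws $ z $ z'\<bar> \<le> real (length ws * l) + 1"
    using kraft_prod_entry_le[OF assms] kraft_prod_entry_nonneg[of f g ws z z'] by simp
qed

definition kraft_norm_max ::
  "('z::finite \<Rightarrow> 'x::finite \<Rightarrow> 'w::finite \<Rightarrow> bool list) \<Rightarrow> ('z \<Rightarrow> 'x \<Rightarrow> 'w \<Rightarrow> 'z)
     \<Rightarrow> nat \<Rightarrow> real" where
  "kraft_norm_max f g n = Max ((\<lambda>ws. norm (kraft_prod f g ws)) ` {ws. length ws = n})"

lemma finite_lists_of_length: "finite {ws :: 'a::finite list. length ws = n}"
  using finite_lists_length_eq[of "UNIV :: 'a set" n] by simp

lemma norm_kraft_prod_le_kraft_norm_max:
  "length ws = n \<Longrightarrow> norm (kraft_prod f g ws) \<le> kraft_norm_max f g n"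
  unfolding kraft_norm_max_def by (rule Max_ge) (auto simp: finite_lists_of_length)

lemma kraft_norm_max_attained:
  obtains ws where "length ws = n" and "kraft_norm_max f g n = norm (kraft_prod f g ws)"
proof -
  have "kraft_norm_max f g n \<in> (\<lambda>ws. norm (kraft_prod f g ws)) ` {ws. length ws = n}"
    unfolding kraft_norm_max_def
    by (rule Max_in) (simp_all add: finite_lists_of_length Ex_list_of_length)
  then show ?thesis using that by blast
qed

lemma kraft_norm_max_nonneg: "kraft_norm_max f g n \<ge> 0"
  by (metis kraft_norm_max_attained norm_ge_zero)

lemma kraft_norm_max_add_le:
  "kraft_norm_max f g (m + n) \<le> kraft_norm_max f g m * kraft_norm_max f g n"
proof -
  obtain ws where ws: "length ws = m + n" "kraft_norm_max f g (m + n) = norm (kraft_prod f g ws)"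
    by (rule kraft_norm_max_attained)
  have "kraft_prod f g ws = kraft_prod f g (take m ws) ** kraft_prod f g (drop m ws)"
    by (simp flip: kraft_prod_append)
  then have "kraft_norm_max f g (m + n) \<le>
      norm (kraft_prod f g (take m ws)) * norm (kraft_prod f g (drop m ws))"
    using ws(2) norm_matrix_mult_le by metis
  also have "\<dots> \<le> kraft_norm_max f g m * kraft_norm_max f g n"
    using ws(1)
    by (intro mult_mono norm_kraft_prod_le_kraft_norm_max kraft_norm_max_nonneg) auto
  finally show ?thesis .
qed

lemma jsr_seq_eq_root_kraft_norm_max: "jsr_seq f g n = kraft_norm_max f g n powr (1 / real n)"
proof -
  have "jsr_seq f g n =
      Max ((\<lambda>t. t powr (1 / real n)) ` (\<lambda>ws. norm (kraft_prod f g ws)) ` {ws. length ws = n})"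
    by (simp add: jsr_seq_def image_image)
  also have "\<dots> = kraft_norm_max f g n powr (1 / real n)"
    unfolding kraft_norm_max_def
    by (rule Max_image_powr) (auto simp: finite_lists_of_length Ex_list_of_length)
  finally show ?thesis .
qed

lemma convergent_jsr_seq: "convergent (jsr_seq f g)"
  unfolding convergent_def jsr_seq_eq_root_kraft_norm_max
  using submultiplicative_root_tendsto_Inf[of "kraft_norm_max f g",
      OF kraft_norm_max_nonneg kraft_norm_max_add_le]
  by blast

lemma kraft_norm_max_linear_bound:
  fixes f :: "'z::finite \<Rightarrow> 'x::finite \<Rightarrow> 'w::finite \<Rightarrow> bool list"
  assumes "info_lossless_si f g"
  obtains c where "c > 0" and "\<And>n. kraft_norm_max f g n \<le> c * (real n + 1)"
proof
  define l where "l = Max (range (\<lambda>(z, x, w). length (f z x w)))"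
  have l: "length (f z x w) \<le> l" for z x w
    unfolding l_def by (rule Max_ge) (auto intro: image_eqI[where x = "(z, x, w)"])
  define c where "c = real CARD('z) * real CARD('z) * (real l + 1)"
  show "c > 0"
    by (simp add: c_def add_pos_nonneg)
  fix n
  obtain ws where "length ws = n" and "kraft_norm_max f g n = norm (kraft_prod f g ws)"
    by (rule kraft_norm_max_attained)
  then have "kraft_norm_max f g n \<le> real CARD('z) * real CARD('z) * (real (n * l) + 1)"
    using norm_kraft_prod_le[OF assms l, of ws] by simp
  also have "\<dots> \<le> c * (real n + 1)"
  proof -
    have "real (n * l) + 1 \<le> (real l + 1) * (real n + 1)"
      by (simp add: algebra_simps)
    then show ?thesis
      using mult_left_mono[of _ _ "real CARD('z) * real CARD('z)"] by (simp add: c_def mult.assoc)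
  qed
  finally show "kraft_norm_max f g n \<le> c * (real n + 1)" .
qed

theorem theorem3:
  fixes f :: "'z::finite \<Rightarrow> 'x::finite \<Rightarrow> 'w::finite \<Rightarrow> bool list"
    and g :: "'z \<Rightarrow> 'x \<Rightarrow> 'w \<Rightarrow> 'z"
  assumes "info_lossless_si f g"
  shows "convergent (jsr_seq f g) \<and> jsr f g \<le> 1"
proof
  show "convergent (jsr_seq f g)"
    by (rule convergent_jsr_seq)
  obtain c where "c > 0" and growth: "\<And>n. kraft_norm_max f g n \<le> c * (real n + 1)"
    using kraft_norm_max_linear_bound[OF assms] by blast
  have "jsr_seq f g n \<le> (c * (real n + 1)) powr (1 / real n)" for n
    unfolding jsr_seq_eq_root_kraft_norm_max
    using growth by (intro powr_mono2 kraft_norm_max_nonneg) auto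
  then have "\<exists>N. \<forall>n\<ge>N. jsr_seq f g n \<le> (c * (real n + 1)) powr (1 / real n)"
    by blast
  moreover have "jsr_seq f g \<longlonglongrightarrow> jsr f g"
    using convergent_jsr_seq by (simp add: jsr_def convergent_LIMSEQ_iff)
  ultimately show "jsr f g \<le> 1"
    using LIMSEQ_le linear_root_tendsto_1[OF \<open>c > 0\<close>] by blast
qed

end
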